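(* For $i\ge 2$ let $X_i$ be a random variable with distribution $p_i$, where $p_i(r)=\lim_{n\to\infty}\Pr(T^{(n)}_{1,i}=r)$ and $T^{(n)}$ is a uniformly random standard Young tableau of shape $(n,n)$. Let $\mu_i=\mathbb E X_i$, $\sigma_i^2=\mathrm{Var}(X_i)$ and $m_{i,k}=\mathbb E[(X_i-\mu_i)^k]/\sigma_i^k$. Then as $i\to\infty$: $$m_{i,3}\to\frac{2(5\pi-16)\sqrt2}{(3\pi-8)^{3/2}},\qquad m_{i,4}\to\frac{15\pi^2+16\pi-192}{(3\pi-8)^2},$$ $$m_{i,5}\to\frac{2(51\pi^2-80\pi-256)\sqrt2}{(3\pi-8)^{5/2}},\qquad m_{i,6}\to\frac{105\pi^3+648\pi^2-2240\pi-2560}{(3\pi-8)^3}.$$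
   Context: A standard Young tableau of shape $(n,n)$ is a bijective filling $T$ of the cells $[a,b]$, $a\in\{1,2\}$, $1\le b\le n$, by $\{1,\dots,2n\}$ that increases along rows and down columns; $T_{1,i}$ denotes the entry in row 1, column $i$. The limits $p_i(r)$ exist and form a probability distribution on $\{i,\dots,2i-1\}$. *)

theory Defs
  imports Complex_Main
begin

text \<open>A tableau is a function T with T a b the entry in row a, column b.
  Cells of shape (n,n): rows 1,2 and columns 1..n. Outside the cells T is 0
  (normalisation so that the set of tableaux is finite).\<close>

definition cells :: "nat \<Rightarrow> (nat \<times> nat) set" where
  "cells n = {1,2} \<times> {1..n}"

definition SYT :: "nat \<Rightarrow> (nat \<Rightarrow> nat \<Rightarrow> nat) set" where
  "SYT n = {T. bij_betw (\<lambda>(a,b). T a b) (cells n) {1..2*n}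
              \<and> (\<forall>a b. (a,b) \<notin> cells n \<longrightarrow> T a b = 0)
              \<and> (\<forall>a b. (a,b) \<in> cells n \<longrightarrow> (a,b+1) \<in> cells n \<longrightarrow> T a b < T a (b+1))
              \<and> (\<forall>b. (1,b) \<in> cells n \<longrightarrow> T 1 b < T 2 b)}"

definition prob_entry :: "nat \<Rightarrow> nat \<Rightarrow> nat \<Rightarrow> real" where
  "prob_entry n i r = real (card {T \<in> SYT n. T 1 i = r}) / real (card (SYT n))"

definition p :: "nat \<Rightarrow> nat \<Rightarrow> real" where
  "p i r = lim (\<lambda>n. prob_entry n i r)"

text \<open>X_i is supported on {i..2i-1}.\<close>
definition mu :: "nat \<Rightarrow> real" where
  "mu i = (\<Sum>r\<in>{i..2*i-1}. real r * p i r)"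

definition sigma :: "nat \<Rightarrow> real" where
  "sigma i = sqrt (\<Sum>r\<in>{i..2*i-1}. (real r - mu i)^2 * p i r)"

definition std_moment :: "nat \<Rightarrow> nat \<Rightarrow> real" where
  "std_moment i k = (\<Sum>r\<in>{i..2*i-1}. (real r - mu i)^k * p i r) / sigma i ^ k"

end

theory Submission
  imports Defs "HOL-Analysis.Gamma_Function" "HOL-Real_Asymp.Real_Asymp" "HOL-Library.FuncSet"
begin

text \<open>Deleting the largest entry shows that two-row tableaux of shape \<open>(a, b)\<close> are counted by
  ballot numbers. If \<open>T\<^sub>1\<^sub>,\<^sub>i = i + j\<close>, the entries below \<open>i + j\<close> form a tableau of shape
  \<open>(i - 1, j)\<close> and the remaining ones a ballot path, counted by the reflection principle; letting
  \<open>n \<rightarrow> \<infinity>\<close> gives \<open>p\<^sub>i(i + j) = (i - j)(i - j + 1)/i \<cdot> C(i - 1 + j, j)/2\<^sup>i\<^sup>+\<^sup>j\<close>.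
  Against these negative binomial weights, every polynomial moment of \<open>2 i - X\<^sub>i\<close> telescopes to a
  polynomial times \<open>C(2 i, i)/4\<^sup>i \<sim> 1/\<surd>(\<pi> i)\<close> (Wallis) plus a polynomial, so
  \<open>E (2 i - X\<^sub>i)\<^sup>t / i\<^sup>t\<^sup>/\<^sup>2\<close> converges to \<open>E (\<surd>2 R)\<^sup>t\<close> for a Maxwell variable \<open>R\<close>.
  Hence the standardized moments of \<open>X\<^sub>i\<close> converge to those of \<open>-R\<close>.\<close>

section \<open>Two-row tableaux\<close>

definition cells2 :: "nat \<Rightarrow> nat \<Rightarrow> (nat \<times> nat) set" where
  "cells2 a b = {1} \<times> {1..a} \<union> {2} \<times> {1..b}"

text \<open>The diagram is a Young diagram only for \<open>b \<le> a\<close>, which the counting lemmas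
  assume.\<close>

definition tab2 :: "nat \<Rightarrow> nat \<Rightarrow> (nat \<Rightarrow> nat \<Rightarrow> nat) set" where
  "tab2 a b = {T. bij_betw (\<lambda>(x,y). T x y) (cells2 a b) {1..a+b}
              \<and> (\<forall>x y. (x,y) \<notin> cells2 a b \<longrightarrow> T x y = 0)
              \<and> (\<forall>c. 1 \<le> c \<longrightarrow> c < a \<longrightarrow> T 1 c < T 1 (Suc c))
              \<and> (\<forall>c. 1 \<le> c \<longrightarrow> c < b \<longrightarrow> T 2 c < T 2 (Suc c))
              \<and> (\<forall>c. 1 \<le> c \<longrightarrow> c \<le> b \<longrightarrow> T 1 c < T 2 c)}"

definition put :: "(nat \<Rightarrow> nat \<Rightarrow> nat) \<Rightarrow> nat \<Rightarrow> nat \<Rightarrow> nat \<Rightarrow> (nat \<Rightarrow> nat \<Rightarrow> nat)" where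
  "put T x0 y0 v = (\<lambda>x y. if x = x0 \<and> y = y0 then v else T x y)"

lemma mem_cells2: "(x,y) \<in> cells2 a b \<longleftrightarrow> (x = 1 \<and> 1 \<le> y \<and> y \<le> a) \<or> (x = 2 \<and> 1 \<le> y \<and> y \<le> b)"
  unfolding cells2_def by auto

lemma finite_cells2: "finite (cells2 a b)"
  unfolding cells2_def by auto

lemma SYT_eq_tab2: "SYT n = tab2 n n"
proof -
  have c: "cells n = cells2 n n" unfolding cells_def cells2_def by auto
  have r: "\<And>T::nat\<Rightarrow>nat\<Rightarrow>nat. (\<forall>a b. (a, b) \<in> cells2 n n \<longrightarrow> (a, b + 1) \<in> cells2 n n \<longrightarrow> T a b < T a (b + 1)) =
      ((\<forall>c. 1 \<le> c \<longrightarrow> c < n \<longrightarrow> T 1 c < T 1 (Suc c)) \<and> (\<forall>c. 1 \<le> c \<longrightarrow> c < n \<longrightarrow> T 2 c < T 2 (Suc c)))"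
      unfolding mem_cells2 by auto
  have l: "\<And>T::nat\<Rightarrow>nat\<Rightarrow>nat. (\<forall>b. (1, b) \<in> cells2 n n \<longrightarrow> T 1 b < T 2 b) = (\<forall>c. 1 \<le> c \<longrightarrow> c \<le> n \<longrightarrow> T 1 c < T 2 c)"
      unfolding mem_cells2 by auto
  show ?thesis
    unfolding SYT_def tab2_def c r l by (simp only: conj_assoc mult_2)
qed

lemma tab2D:
  assumes "T \<in> tab2 a b"
  shows "bij_betw (\<lambda>(x,y). T x y) (cells2 a b) {1..a+b}"
    "\<And>x y. (x,y) \<notin> cells2 a b \<Longrightarrow> T x y = 0"
    "\<And>c. 1 \<le> c \<Longrightarrow> c < a \<Longrightarrow> T 1 c < T 1 (Suc c)"
    "\<And>c. 1 \<le> c \<Longrightarrow> c < b \<Longrightarrow> T 2 c < T 2 (Suc c)"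
    "\<And>c. 1 \<le> c \<Longrightarrow> c \<le> b \<Longrightarrow> T 1 c < T 2 c"
  using assms unfolding tab2_def by auto

lemma tab2_entry_range:
  assumes "T \<in> tab2 a b" "(x,y) \<in> cells2 a b"
  shows "1 \<le> T x y" "T x y \<le> a + b"
proof -
  have "(\<lambda>(x,y). T x y) ` cells2 a b = {1..a+b}" using tab2D(1)[OF assms(1)] by (simp add: bij_betw_def)
  then have "T x y \<in> {1..a+b}" using assms(2) by force
  then show "1 \<le> T x y" "T x y \<le> a + b" by auto
qed

lemma tab2_entry_le:
  assumes "T \<in> tab2 a b"
  shows "T x y \<le> a + b"
  using tab2_entry_range(2)[OF assms] tab2D(2)[OF assms] by (cases "(x, y) \<in> cells2 a b") auto

lemma tab2_entry_inj:
  assumes "T \<in> tab2 a b" "(x,y) \<in> cells2 a b" "(x',y') \<in> cells2 a b" "T x y = T x' y'"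
  shows "x = x' \<and> y = y'"
proof -
  have "inj_on (\<lambda>(x,y). T x y) (cells2 a b)" using tab2D(1)[OF assms(1)] by (simp add: bij_betw_def)
  then show ?thesis using assms(2-4) unfolding inj_on_def by fastforce
qed

lemma tab2_entry_surj:
  assumes "T \<in> tab2 a b" "1 \<le> v" "v \<le> a + b"
  obtains x y where "(x,y) \<in> cells2 a b" "T x y = v"
proof -
  have "(\<lambda>(x,y). T x y) ` cells2 a b = {1..a+b}" using tab2D(1)[OF assms(1)] by (simp add: bij_betw_def)
  then have "v \<in> (\<lambda>(x,y). T x y) ` cells2 a b" using assms by auto
  then show ?thesis using that by auto
qed

lemma tab2_max_entry:
  assumes T: "T \<in> tab2 a b" and "1 \<le> a + b"
  shows "T 1 a = a + b \<or> T 2 b = a + b"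
proof -
  obtain x y where xy: "(x, y) \<in> cells2 a b" "T x y = a + b"
    using tab2_entry_surj[OF T, of "a + b"] assms(2) by auto
  have "\<not> y < a" if "x = 1"
    using that xy tab2D(3)[OF T, of y] tab2_entry_le[OF T, of 1 "Suc y"] by (auto simp: mem_cells2)
  moreover have "\<not> y < b" if "x = 2"
    using that xy tab2D(4)[OF T, of y] tab2_entry_le[OF T, of 2 "Suc y"] by (auto simp: mem_cells2)
  ultimately show ?thesis
    using xy by (auto simp: mem_cells2 not_less le_antisym)
qed

lemma finite_tab2: "finite (tab2 a b)"
proof (rule inj_on_finite)
  let ?f = "\<lambda>T. restrict (\<lambda>(x, y). T x y) (cells2 a b)"
  show "inj_on ?f (tab2 a b)"
  proof (intro inj_onI ext)
    fix T T' x y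
    assume T: "T \<in> tab2 a b" and T': "T' \<in> tab2 a b" and eq: "?f T = ?f T'"
    show "T x y = T' x y"
    proof (cases "(x, y) \<in> cells2 a b")
      case True
      then show ?thesis
        using fun_cong[OF eq, of "(x, y)"] by simp
    qed (simp add: tab2D(2)[OF T] tab2D(2)[OF T'])
  qed
  show "?f ` tab2 a b \<subseteq> PiE (cells2 a b) (\<lambda>_. {0..a + b})"
    using tab2_entry_le by fastforce
  show "finite (PiE (cells2 a b) (\<lambda>_. {0..a + b}))"
    by (intro finite_PiE finite_cells2) auto
qed

lemma tab2_0_0: "tab2 0 0 = {\<lambda>x y. 0}"
proof -
  have c: "cells2 0 0 = {}" unfolding cells2_def by auto
  show ?thesis unfolding tab2_def c by (auto simp: fun_eq_iff bij_betw_def)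
qed

lemma cells2_insert_row1: "1 \<le> a \<Longrightarrow> cells2 a b = cells2 (a - 1) b \<union> {(1, a)}"
  unfolding cells2_def by auto
lemma cells2_insert_row2: "1 \<le> b \<Longrightarrow> cells2 a b = cells2 a (b - 1) \<union> {(2, b)}"
  unfolding cells2_def by auto

lemma put_apply: "put T x0 y0 v x y = (if x = x0 \<and> y = y0 then v else T x y)"
  unfolding put_def by simp

lemma bij_betw_put:
  assumes "(x0,y0) \<notin> C" "v \<notin> V"
  shows "bij_betw (\<lambda>(x,y). put T x0 y0 v x y) (C \<union> {(x0,y0)}) (V \<union> {v}) \<longleftrightarrow>
         bij_betw (\<lambda>(x,y). T x y) C V"
proof -
  have "bij_betw (\<lambda>(x,y). put T x0 y0 v x y) (C \<union> {(x0,y0)}) (V \<union> {v}) \<longleftrightarrow>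
        bij_betw (\<lambda>(x,y). put T x0 y0 v x y) C V"
    using notIn_Un_bij_betw3[of "(x0,y0)" C "\<lambda>(x,y). put T x0 y0 v x y" V] assms
    by (simp add: put_apply)
  also have "\<dots> \<longleftrightarrow> bij_betw (\<lambda>(x,y). T x y) C V"
    using assms(1) by (intro bij_betw_cong) (auto simp: put_apply)
  finally show ?thesis .
qed

lemma tab2I:
  assumes "bij_betw (\<lambda>(x,y). T x y) (cells2 a b) {1..a+b}"
    and "\<And>x y. (x,y) \<notin> cells2 a b \<Longrightarrow> T x y = 0"
    and "\<And>c. 1 \<le> c \<Longrightarrow> c < a \<Longrightarrow> T 1 c < T 1 (Suc c)"
    and "\<And>c. 1 \<le> c \<Longrightarrow> c < b \<Longrightarrow> T 2 c < T 2 (Suc c)"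
    and "\<And>c. 1 \<le> c \<Longrightarrow> c \<le> b \<Longrightarrow> T 1 c < T 2 c"
  shows "T \<in> tab2 a b"
  using assms unfolding tab2_def by blast

lemma put_row1_in_tab2:
  assumes T: "T \<in> tab2 (a - 1) b" and a: "1 \<le> a" "b < a"
  shows "put T 1 a (a + b) \<in> tab2 a b"
proof (rule tab2I)
  have new: "(1, a) \<notin> cells2 (a - 1) b" "a + b \<notin> {1..a - 1 + b}" and top: "{1..a + b} = {1..a - 1 + b} \<union> {a + b}"
    using a by (auto simp: mem_cells2)
  show "bij_betw (\<lambda>(x, y). put T 1 a (a + b) x y) (cells2 a b) {1..a + b}"
    unfolding cells2_insert_row1[OF a(1)] top bij_betw_put[OF new] using tab2D(1)[OF T] .
  show "put T 1 a (a + b) x y = 0" if "(x, y) \<notin> cells2 a b" for x y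
  proof -
    have "(x, y) \<notin> cells2 (a - 1) b" "(x, y) \<noteq> (1, a)"
      using that a by (auto simp: mem_cells2)
    then show ?thesis
      using tab2D(2)[OF T] by (auto simp: put_apply)
  qed
  show "put T 1 a (a + b) 1 c < put T 1 a (a + b) 1 (Suc c)" if "1 \<le> c" "c < a" for c
    using that tab2D(3)[OF T, of c] tab2_entry_le[OF T, of 1 c] by (auto simp: put_apply)
  show "put T 1 a (a + b) 2 c < put T 1 a (a + b) 2 (Suc c)" if "1 \<le> c" "c < b" for c
    using that tab2D(4)[OF T, of c] by (simp add: put_apply)
  show "put T 1 a (a + b) 1 c < put T 1 a (a + b) 2 c" if "1 \<le> c" "c \<le> b" for c
    using that tab2D(5)[OF T, of c] a by (simp add: put_apply)
qed

lemma put_row2_in_tab2: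
  assumes T: "T \<in> tab2 a (b - 1)" and b: "1 \<le> b" "b \<le> a"
  shows "put T 2 b (a + b) \<in> tab2 a b"
proof (rule tab2I)
  have new: "(2, b) \<notin> cells2 a (b - 1)" "a + b \<notin> {1..a + (b - 1)}" and top: "{1..a + b} = {1..a + (b - 1)} \<union> {a + b}"
    using b by (auto simp: mem_cells2)
  show "bij_betw (\<lambda>(x, y). put T 2 b (a + b) x y) (cells2 a b) {1..a + b}"
    unfolding cells2_insert_row2[OF b(1)] top bij_betw_put[OF new] using tab2D(1)[OF T] .
  show "put T 2 b (a + b) x y = 0" if "(x, y) \<notin> cells2 a b" for x y
  proof -
    have "(x, y) \<notin> cells2 a (b - 1)" "(x, y) \<noteq> (2, b)"
      using that b by (auto simp: mem_cells2)
    then show ?thesis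
      using tab2D(2)[OF T] by (auto simp: put_apply)
  qed
  show "put T 2 b (a + b) 1 c < put T 2 b (a + b) 1 (Suc c)" if "1 \<le> c" "c < a" for c
    using that tab2D(3)[OF T, of c] by (simp add: put_apply)
  show "put T 2 b (a + b) 2 c < put T 2 b (a + b) 2 (Suc c)" if "1 \<le> c" "c < b" for c
    using that tab2D(4)[OF T, of c] tab2_entry_le[OF T, of 2 c] b by (auto simp: put_apply)
  show "put T 2 b (a + b) 1 c < put T 2 b (a + b) 2 c" if "1 \<le> c" "c \<le> b" for c
    using that tab2D(5)[OF T, of c] tab2_entry_le[OF T, of 1 c] b by (auto simp: put_apply)
qed

lemma clear_row1_in_tab2:
  assumes T: "T \<in> tab2 a b" and m: "T 1 a = a + b" and a: "1 \<le> a" "b < a"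
  shows "put T 1 a 0 \<in> tab2 (a - 1) b"
proof (rule tab2I)
  have new: "(1, a) \<notin> cells2 (a - 1) b" "a + b \<notin> {1..a - 1 + b}" and top: "{1..a + b} = {1..a - 1 + b} \<union> {a + b}"
    using a by (auto simp: mem_cells2)
  have "put (put T 1 a 0) 1 a (a + b) = T"
    using m by (auto simp: put_apply fun_eq_iff)
  then have "bij_betw (\<lambda>(x, y). put (put T 1 a 0) 1 a (a + b) x y) (cells2 (a - 1) b \<union> {(1, a)}) ({1..a - 1 + b} \<union> {a + b})"
    using tab2D(1)[OF T] unfolding cells2_insert_row1[OF a(1)] top by (simp only:)
  then show "bij_betw (\<lambda>(x, y). put T 1 a 0 x y) (cells2 (a - 1) b) {1..a - 1 + b}"
    unfolding bij_betw_put[OF new] .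
  show "put T 1 a 0 x y = 0" if "(x, y) \<notin> cells2 (a - 1) b" for x y
  proof (cases "(x, y) = (1, a)")
    case False
    with that have "(x, y) \<notin> cells2 a b"
      by (auto simp: mem_cells2)
    with False show ?thesis
      using tab2D(2)[OF T] by (simp add: put_apply)
  qed (simp add: put_apply)
  show "put T 1 a 0 1 c < put T 1 a 0 1 (Suc c)" if "1 \<le> c" "c < a - 1" for c
    using that tab2D(3)[OF T, of c] by (auto simp: put_apply)
  show "put T 1 a 0 2 c < put T 1 a 0 2 (Suc c)" if "1 \<le> c" "c < b" for c
    using that tab2D(4)[OF T, of c] by (simp add: put_apply)
  show "put T 1 a 0 1 c < put T 1 a 0 2 c" if "1 \<le> c" "c \<le> b" for c
    using that tab2D(5)[OF T, of c] a by (simp add: put_apply)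
qed

lemma clear_row2_in_tab2:
  assumes T: "T \<in> tab2 a b" and m: "T 2 b = a + b" and b: "1 \<le> b" "b \<le> a"
  shows "put T 2 b 0 \<in> tab2 a (b - 1)"
proof (rule tab2I)
  have new: "(2, b) \<notin> cells2 a (b - 1)" "a + b \<notin> {1..a + (b - 1)}" and top: "{1..a + b} = {1..a + (b - 1)} \<union> {a + b}"
    using b by (auto simp: mem_cells2)
  have "put (put T 2 b 0) 2 b (a + b) = T"
    using m by (auto simp: put_apply fun_eq_iff)
  then have "bij_betw (\<lambda>(x, y). put (put T 2 b 0) 2 b (a + b) x y) (cells2 a (b - 1) \<union> {(2, b)}) ({1..a + (b - 1)} \<union> {a + b})"
    using tab2D(1)[OF T] unfolding cells2_insert_row2[OF b(1)] top by (simp only:)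
  then show "bij_betw (\<lambda>(x, y). put T 2 b 0 x y) (cells2 a (b - 1)) {1..a + (b - 1)}"
    unfolding bij_betw_put[OF new] .
  show "put T 2 b 0 x y = 0" if "(x, y) \<notin> cells2 a (b - 1)" for x y
  proof (cases "(x, y) = (2, b)")
    case False
    with that have "(x, y) \<notin> cells2 a b"
      by (auto simp: mem_cells2)
    with False show ?thesis
      using tab2D(2)[OF T] by (simp add: put_apply)
  qed (simp add: put_apply)
  show "put T 2 b 0 1 c < put T 2 b 0 1 (Suc c)" if "1 \<le> c" "c < a" for c
    using that tab2D(3)[OF T, of c] by (simp add: put_apply)
  show "put T 2 b 0 2 c < put T 2 b 0 2 (Suc c)" if "1 \<le> c" "c < b - 1" for c
    using that tab2D(4)[OF T, of c] by (auto simp: put_apply)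
  show "put T 2 b 0 1 c < put T 2 b 0 2 c" if "1 \<le> c" "c \<le> b - 1" for c
    using that tab2D(5)[OF T, of c] by (simp add: put_apply)
qed

lemma put_put: "put (put T x y u) x y v = put T x y v"
  by (auto simp: put_apply fun_eq_iff)
lemma put_same: "T x y = v \<Longrightarrow> put T x y v = T"
  by (auto simp: put_apply fun_eq_iff)

lemma card_tab2_max_row1:
  assumes a: "1 \<le> a" "b < a"
  shows "card {T \<in> tab2 a b. T 1 a = a + b \<and> Q T} = card {T \<in> tab2 (a - 1) b. Q (put T 1 a (a + b))}"
proof -
  have "bij_betw (\<lambda>T. put T 1 a (a + b)) {T \<in> tab2 (a - 1) b. Q (put T 1 a (a + b))} {T \<in> tab2 a b. T 1 a = a + b \<and> Q T}"
  proof (rule bij_betw_byWitness[where f' = "\<lambda>T. put T 1 a 0"])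
    show "\<forall>T\<in>{T \<in> tab2 (a - 1) b. Q (put T 1 a (a + b))}. put (put T 1 a (a + b)) 1 a 0 = T"
    proof
      fix T assume "T \<in> {T \<in> tab2 (a - 1) b. Q (put T 1 a (a + b))}"
      then have "T 1 a = 0" using tab2D(2)[of T "a - 1" b 1 a] a unfolding mem_cells2 by auto
      then show "put (put T 1 a (a + b)) 1 a 0 = T" by (simp add: put_put put_same)
    qed
    show "\<forall>T\<in>{T \<in> tab2 a b. T 1 a = a + b \<and> Q T}. put (put T 1 a 0) 1 a (a + b) = T"
      by (auto simp: put_put put_same)
    show "(\<lambda>T. put T 1 a (a + b)) ` {T \<in> tab2 (a - 1) b. Q (put T 1 a (a + b))} \<subseteq> {T \<in> tab2 a b. T 1 a = a + b \<and> Q T}"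
      using put_row1_in_tab2[OF _ a] by (auto simp: put_apply)
    show "(\<lambda>T. put T 1 a 0) ` {T \<in> tab2 a b. T 1 a = a + b \<and> Q T} \<subseteq> {T \<in> tab2 (a - 1) b. Q (put T 1 a (a + b))}"
      using clear_row1_in_tab2[OF _ _ a] by (auto simp: put_put put_same)
  qed
  then show ?thesis by (simp add: bij_betw_same_card)
qed

lemma card_tab2_max_row2:
  assumes b: "1 \<le> b" "b \<le> a"
  shows "card {T \<in> tab2 a b. T 2 b = a + b \<and> Q T} = card {T \<in> tab2 a (b - 1). Q (put T 2 b (a + b))}"
proof -
  have "bij_betw (\<lambda>T. put T 2 b (a + b)) {T \<in> tab2 a (b - 1). Q (put T 2 b (a + b))} {T \<in> tab2 a b. T 2 b = a + b \<and> Q T}"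
  proof (rule bij_betw_byWitness[where f' = "\<lambda>T. put T 2 b 0"])
    show "\<forall>T\<in>{T \<in> tab2 a (b - 1). Q (put T 2 b (a + b))}. put (put T 2 b (a + b)) 2 b 0 = T"
    proof
      fix T assume "T \<in> {T \<in> tab2 a (b - 1). Q (put T 2 b (a + b))}"
      then have "T 2 b = 0" using tab2D(2)[of T a "b - 1" 2 b] b unfolding mem_cells2 by auto
      then show "put (put T 2 b (a + b)) 2 b 0 = T" by (simp add: put_put put_same)
    qed
    show "\<forall>T\<in>{T \<in> tab2 a b. T 2 b = a + b \<and> Q T}. put (put T 2 b 0) 2 b (a + b) = T"
      by (auto simp: put_put put_same)
    show "(\<lambda>T. put T 2 b (a + b)) ` {T \<in> tab2 a (b - 1). Q (put T 2 b (a + b))} \<subseteq> {T \<in> tab2 a b. T 2 b = a + b \<and> Q T}"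
      using put_row2_in_tab2[OF _ b] by (auto simp: put_apply)
    show "(\<lambda>T. put T 2 b 0) ` {T \<in> tab2 a b. T 2 b = a + b \<and> Q T} \<subseteq> {T \<in> tab2 a (b - 1). Q (put T 2 b (a + b))}"
      using clear_row2_in_tab2[OF _ _ b] by (auto simp: put_put put_same)
  qed
  then show ?thesis by (simp add: bij_betw_same_card)
qed

lemma tab2_max_row1_imp_less:
  assumes T: "T \<in> tab2 a b" and "T 1 a = a + b" "b \<le> a" "1 \<le> a + b"
  shows "b < a"
proof (rule ccontr)
  assume "\<not> b < a"
  then have "a = b" "1 \<le> a" using assms(3,4) by auto
  then have "T 1 a < T 2 a" using tab2D(5)[OF T, of a] by simp
  with assms(2) tab2_entry_le[OF T, of 2 a] show False by simp
qed

lemma tab2_max_row2_imp_pos: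
  assumes T: "T \<in> tab2 a b" and "T 2 b = a + b" "1 \<le> a + b"
  shows "1 \<le> b"
proof (rule ccontr)
  assume "\<not> 1 \<le> b"
  then have "T 2 b = 0" using tab2D(2)[OF T, of 2 b] unfolding mem_cells2 by simp
  with assms(2,3) show False by simp
qed

text \<open>Removing the largest entry \<open>a + b\<close>, which sits at the end of one of the two rows.\<close>

lemma card_tab2_rec:
  assumes ba: "b \<le> a" and pos: "1 \<le> a + b"
  shows "card {T \<in> tab2 a b. Q T} =
    (if b < a then card {T \<in> tab2 (a - 1) b. Q (put T 1 a (a + b))} else 0) +
    (if 1 \<le> b then card {T \<in> tab2 a (b - 1). Q (put T 2 b (a + b))} else 0)"
proof -
  let ?S1 = "{T \<in> tab2 a b. T 1 a = a + b \<and> Q T}"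
  let ?S2 = "{T \<in> tab2 a b. T 2 b = a + b \<and> Q T}"
  have split: "{T \<in> tab2 a b. Q T} = ?S1 \<union> ?S2"
    using tab2_max_entry[OF _ pos] by blast
  have disjoint: "?S1 \<inter> ?S2 = {}"
  proof (rule ccontr)
    assume "?S1 \<inter> ?S2 \<noteq> {}"
    then obtain T where T: "T \<in> tab2 a b" "T 1 a = a + b" "T 2 b = a + b" by blast
    have "(1, a) \<in> cells2 a b" "(2, b) \<in> cells2 a b"
      using tab2D(2)[OF T(1)] T(2,3) pos by (metis not_one_le_zero)+
    with tab2_entry_inj[OF T(1)] T(2,3) show False by fastforce
  qed
  have card1: "card ?S1 = (if b < a then card {T \<in> tab2 (a - 1) b. Q (put T 1 a (a + b))} else 0)"
  proof (cases "b < a")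
    case False
    then have "?S1 = {}"
      using tab2_max_row1_imp_less[OF _ _ ba pos] by blast
    with False show ?thesis
      by (metis card.empty)
  qed (use card_tab2_max_row1[of a b Q] pos in simp)
  have card2: "card ?S2 = (if 1 \<le> b then card {T \<in> tab2 a (b - 1). Q (put T 2 b (a + b))} else 0)"
  proof (cases "1 \<le> b")
    case False
    then have "?S2 = {}"
      using tab2_max_row2_imp_pos[OF _ _ pos] by blast
    with False show ?thesis
      by (metis card.empty)
  qed (use card_tab2_max_row2[of b a Q] ba in simp)
  have finite: "finite ?S1" "finite ?S2"
    using finite_tab2 by auto
  show ?thesis
    unfolding split card_Un_disjoint[OF finite disjoint] card1 card2 ..
qed

section \<open>Ballot numbers\<close>

definition ballot :: "nat \<Rightarrow> nat \<Rightarrow> real" where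
  "ballot a b = real ((a + b) choose b) * (real a + 1 - real b) / (real a + 1)"

lemma real_binomial_pred:
  assumes "1 \<le> n"
  shows "real ((n - 1) choose b) = real (n choose b) * (real n - real b) / real n"
proof -
  have "real (n - b) * real (n choose b) = real n * real ((n - 1) choose b)"
    using binomial_absorb_comp[of n b] by (metis of_nat_mult)
  with assms show ?thesis
    by (cases "b \<le> n") (auto simp: field_simps binomial_eq_0)
qed

lemma real_binomial_pred_pred:
  assumes "1 \<le> b" "1 \<le> n"
  shows "real ((n - 1) choose (b - 1)) = real (n choose b) * real b / real n"
proof -
  have "real b * real (n choose b) = real n * real ((n - 1) choose (b - 1))"
    using times_binomial_minus1_eq[of b n] assms(1) by (metis of_nat_mult less_le_trans zero_less_one)
  with assms show ?thesis
    by (simp add: field_simps)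
qed

lemma ballot_pred_row1:
  assumes "1 \<le> a"
  shows "ballot (a - 1) b = real ((a + b) choose b) * (real a - real b) / real (a + b)"
proof -
  define n where "n = a + b"
  have n: "1 \<le> n" "real n - real b = real a"
    using assms unfolding n_def by auto
  have "ballot (a - 1) b = real ((n - 1) choose b) * (real a - real b) / real a"
    using assms unfolding ballot_def n_def by (simp add: of_nat_diff algebra_simps)
  also have "\<dots> = real (n choose b) * (real n - real b) / real n * (real a - real b) / real a"
    unfolding real_binomial_pred[OF n(1)] ..
  also have "\<dots> = real (n choose b) * real a / real n * (real a - real b) / real a"
    unfolding n(2) ..
  also have "\<dots> = real (n choose b) * (real a - real b) / real n"
    using assms by simp
  finally show ?thesis
    unfolding n_def .
qed

lemma ballot_pred_row2:
  assumes "1 \<le> b"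
  shows "ballot a (b - 1) = real ((a + b) choose b) * real b / real (a + b) * (real a - real b + 2) / (real a + 1)"
proof -
  define n where "n = a + b"
  have n: "1 \<le> n"
    using assms unfolding n_def by simp
  have "ballot a (b - 1) = real ((n - 1) choose (b - 1)) * (real a + 1 - real (b - 1)) / (real a + 1)"
    unfolding ballot_def n_def using assms by (simp add: algebra_simps)
  also have "\<dots> = real (n choose b) * real b / real n * (real a - real b + 2) / (real a + 1)"
    unfolding real_binomial_pred_pred[OF assms n] using assms by (simp add: of_nat_diff algebra_simps)
  finally show ?thesis
    unfolding n_def .
qed

lemma ballot_rec:
  assumes ba: "b \<le> a" and pos: "1 \<le> a + b"
  shows "ballot a b = (if b < a then ballot (a - 1) b else 0) + (if 1 \<le> b then ballot a (b - 1) else 0)"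
proof (cases "1 \<le> b")
  case True
  define n where "n = real (a + b)"
  define c where "c = real ((a + b) choose b)"
  have n: "n = real a + real b" "n \<noteq> 0"
    using pos unfolding n_def by auto
  have common_denom: "u / d + v / d * w / e = (u * e + v * w) / (d * e)" if "d \<noteq> 0" "e \<noteq> 0" for u v w d e :: real
    using that by (simp add: field_simps)
  have "ballot (a - 1) b + ballot a (b - 1)
      = c * (real a - real b) / n + c * real b / n * (real a - real b + 2) / (real a + 1)"
    using ba True unfolding n_def c_def ballot_pred_row1[OF order_trans[OF True ba]] ballot_pred_row2[OF True] by simp
  also have "\<dots> = (c * (real a - real b) * (real a + 1) + c * real b * (real a - real b + 2)) / (n * (real a + 1))"
    by (rule common_denom) (use n in auto)
  also have "c * (real a - real b) * (real a + 1) + c * real b * (real a - real b + 2) = c * (n * (real a + 1 - real b))"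
    by (simp add: n algebra_simps)
  also have "c * (n * (real a + 1 - real b)) / (n * (real a + 1)) = ballot a b"
    unfolding ballot_def c_def using n by simp
  finally show ?thesis
    using True ba by (auto simp: ballot_def)
next
  case False
  then have "b = 0"
    by simp
  with pos show ?thesis
    by (simp add: ballot_def)
qed

lemma card_tab2: "b \<le> a \<Longrightarrow> real (card (tab2 a b)) = ballot a b"
proof (induction "a + b" arbitrary: a b rule: less_induct)
  case less
  show ?case
  proof (cases "a + b = 0")
    case True
    then show ?thesis
      by (simp add: tab2_0_0 ballot_def)
  next
    case False
    then have pos: "1 \<le> a + b" by linarith
    have "card (tab2 a b) = (if b < a then card (tab2 (a - 1) b) else 0) + (if 1 \<le> b then card (tab2 a (b - 1)) else 0)"
      using card_tab2_rec[OF less.prems pos, of "\<lambda>_. True"] by simp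
    moreover have "b < a \<Longrightarrow> real (card (tab2 (a - 1) b)) = ballot (a - 1) b"
      using less.hyps[of "a - 1" b] by simp
    moreover have "1 \<le> b \<Longrightarrow> real (card (tab2 a (b - 1))) = ballot a (b - 1)"
      using less.hyps[of a "b - 1"] less.prems by simp
    ultimately show ?thesis
      by (simp add: ballot_rec[OF less.prems pos])
  qed
qed

definition binom_int :: "nat \<Rightarrow> int \<Rightarrow> real" where
  "binom_int m k = (if k < 0 then 0 else real (m choose nat k))"

text \<open>If the entry \<open>i + j\<close> sits at cell \<open>(1, i)\<close>, a tableau of shape \<open>(a, b)\<close> splits into
  a tableau of shape \<open>(i - 1, j)\<close> and a growth from shape \<open>(i, j)\<close> to \<open>(a, b)\<close>, i.e. a lattice
  path with \<open>m = a + b - i - j\<close> steps along which row 2 never gets longer than row 1. By the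
  reflection principle these paths number \<open>reflect_count i j a m\<close>.\<close>

definition reflect_count :: "nat \<Rightarrow> nat \<Rightarrow> int \<Rightarrow> nat \<Rightarrow> real" where
  "reflect_count i j a m = binom_int m (a - int i) - binom_int m (a + 1 - int j)"

lemma binom_int_of_nat [simp]: "binom_int m (int k) = real (m choose k)"
  unfolding binom_int_def by simp

lemma binom_int_Suc: "binom_int (Suc m) k = binom_int m k + binom_int m (k - 1)"
proof (cases "k \<le> 0")
  case True
  then show ?thesis by (auto simp: binom_int_def)
next
  case False
  then have "nat k = Suc (nat (k - 1))" by simp
  with False show ?thesis by (simp add: binom_int_def)
qed

lemma binom_int_eq_0: "k > int m \<Longrightarrow> binom_int m k = 0"
  unfolding binom_int_def by (simp add: binomial_eq_0)

lemma binom_int_symmetric: "binom_int m k = binom_int m (int m - k)"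
  unfolding binom_int_def using binomial_symmetric[of "nat k" m]
  by (auto simp: nat_diff_distrib binomial_eq_0)

lemma reflect_count_Suc: "reflect_count i j a (Suc m) = reflect_count i j a m + reflect_count i j (a - 1) m"
  unfolding reflect_count_def binom_int_Suc by (simp add: algebra_simps)

lemma reflect_count_0: "j \<le> a \<Longrightarrow> reflect_count i j (int a) 0 = (if a = i then 1 else 0)"
  unfolding reflect_count_def binom_int_def by (auto simp: binomial_eq_0)

lemma reflect_count_row1_full: "a = m + i + j + 1 \<Longrightarrow> reflect_count i j (int a) m = 0"
  unfolding reflect_count_def by (simp add: binom_int_eq_0)

lemma reflect_count_rows_equal:
  assumes "2 * a = m + i + j + 1"
  shows "reflect_count i j (int a - 1) m = 0"
proof -
  have "int a - 1 + 1 - int j = int m - (int a - 1 - int i)"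
    using assms by linarith
  then show ?thesis
    unfolding reflect_count_def using binom_int_symmetric[of m "int a - 1 - int i"] by (simp only:)
qed

lemma card_tab2_row1_rec:
  assumes "b \<le> a" "1 \<le> a + b"
  shows "card {T \<in> tab2 a b. T 1 i = v} =
    (if b < a then card {T \<in> tab2 (a - 1) b. put T 1 a (a + b) 1 i = v} else 0) +
    (if 1 \<le> b then card {T \<in> tab2 a (b - 1). T 1 i = v} else 0)"
  using card_tab2_rec[OF assms] by (simp add: put_apply)

lemma card_tab2_entry_top:
  assumes ij: "j < i" and ba: "b \<le> a" and full: "a + b = i + j"
  shows "real (card {T \<in> tab2 a b. T 1 i = i + j}) = (if a = i then ballot (i - 1) j else 0)"
proof -
  have pos: "1 \<le> a + b" and a1: "1 \<le> a"
    using assms by auto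
  have below: "T 1 i < i + j" if "T \<in> tab2 a' b'" "a' + b' < i + j" for T a' b'
    using tab2_entry_le[OF that(1), of 1 i] that(2) by simp
  have row1: "{T \<in> tab2 (a - 1) b. put T 1 a (a + b) 1 i = i + j} = (if i = a then tab2 (a - 1) b else {})"
  proof (cases "i = a")
    case False
    have "put T 1 a (a + b) 1 i \<noteq> i + j" if "T \<in> tab2 (a - 1) b" for T
      using below[OF that] full a1 ij False by (simp add: put_apply)
    with False show ?thesis
      by auto
  qed (use full in \<open>simp add: put_apply\<close>)
  have row2: "(if 1 \<le> b then card {T \<in> tab2 a (b - 1). T 1 i = i + j} else 0) = 0"
  proof (cases "1 \<le> b")
    case True
    then have "{T \<in> tab2 a (b - 1). T 1 i = i + j} = {}"
      using below[of _ a "b - 1"] full by fastforce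
    then show ?thesis
      by (simp only: card.empty if_cancel)
  qed simp
  show ?thesis
    unfolding card_tab2_row1_rec[OF ba pos] row1 row2 using card_tab2[of b "a - 1"] full ij by auto
qed

lemma card_tab2_entry:
  assumes ij: "j < i" and "b \<le> a" "i + j \<le> a + b"
  shows "real (card {T \<in> tab2 a b. T 1 i = i + j}) = ballot (i - 1) j * reflect_count i j (int a) (a + b - (i + j))"
  using assms(2,3)
proof (induction "a + b" arbitrary: a b rule: less_induct)
  case less
  show ?case
  proof (cases "a + b = i + j")
    case True
    moreover have "j \<le> a"
      using True less.prems ij by linarith
    ultimately show ?thesis
      using card_tab2_entry_top[OF ij less.prems(1)] by (simp add: reflect_count_0)
  next
    case False
    then have gt: "i + j < a + b" and pos: "1 \<le> a + b" and a1: "1 \<le> a"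
      using less.prems by auto
    define m where "m = a + b - 1 - (i + j)"
    have row1: "{T \<in> tab2 (a - 1) b. put T 1 a (a + b) 1 i = i + j} = {T \<in> tab2 (a - 1) b. T 1 i = i + j}"
    proof (intro Collect_cong conj_cong refl)
      fix T
      assume "T \<in> tab2 (a - 1) b"
      then have "T 1 a = 0"
        using tab2D(2)[of T "a - 1" b 1 a] a1 by (simp add: mem_cells2)
      then show "(put T 1 a (a + b) 1 i = i + j) = (T 1 i = i + j)"
        using gt a1 by (auto simp: put_apply)
    qed
    have "b < a \<Longrightarrow> real (card {T \<in> tab2 (a - 1) b. T 1 i = i + j}) = ballot (i - 1) j * reflect_count i j (int a - 1) m"
      using less.hyps[of "a - 1" b] gt a1 unfolding m_def by (simp add: of_nat_diff)
    moreover have "1 \<le> b \<Longrightarrow> real (card {T \<in> tab2 a (b - 1). T 1 i = i + j}) = ballot (i - 1) j * reflect_count i j (int a) m"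
      using less.hyps[of a "b - 1"] gt less.prems unfolding m_def by simp
    moreover have "\<not> 1 \<le> b \<Longrightarrow> reflect_count i j (int a) m = 0"
      by (rule reflect_count_row1_full) (use gt m_def in simp)
    moreover have "\<not> b < a \<Longrightarrow> reflect_count i j (int a - 1) m = 0"
      by (rule reflect_count_rows_equal) (use gt m_def less.prems in simp)
    moreover have steps: "a + b - (i + j) = Suc m"
      unfolding m_def using gt by simp
    ultimately show ?thesis
      unfolding card_tab2_row1_rec[OF less.prems(1) pos] row1 steps reflect_count_Suc by (auto simp: distrib_left)
  qed
qed

section \<open>The limit law\<close>

lemma binomial_ratio_Suc_right:
  assumes "a + b < n"
  shows "real ((2 * n - a - Suc b) choose (n - a)) =
    real ((2 * n - a - b) choose (n - a)) * ((real n - real b) / (2 * real n - real a - real b))"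
proof -
  define M where "M = 2 * n - a - b"
  have "(M - (n - a)) * (M choose (n - a)) = M * ((M - 1) choose (n - a))"
    by (rule binomial_absorb_comp)
  moreover have "M - (n - a) = n - b" "M - 1 = 2 * n - a - Suc b"
    "real M = 2 * real n - real a - real b" "real (n - b) = real n - real b"
    using assms unfolding M_def by auto
  moreover have "real M > 0"
    using assms unfolding M_def by simp
  ultimately show ?thesis
    unfolding M_def[symmetric] by (metis (no_types) of_nat_mult nonzero_mult_div_cancel_left
      less_irrefl mult.commute times_divide_eq_right)
qed

lemma binomial_ratio_Suc_left:
  assumes "a + b < n"
  shows "real ((2 * n - Suc a - b) choose (n - Suc a)) =
    real ((2 * n - a - b) choose (n - a)) * ((real n - real a) / (2 * real n - real a - real b))"
proof -
  have sym: "(2 * n - x - y) choose (n - x) = (2 * n - y - x) choose (n - y)" if "x + y \<le> n" for x y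
    using binomial_symmetric[of "n - x" "2 * n - x - y"] that by (simp add: algebra_simps)
  have "(2 * n - Suc a - b) choose (n - Suc a) = (2 * n - b - Suc a) choose (n - b)"
    using sym[of "Suc a" b] assms by simp
  with binomial_ratio_Suc_right[of b a n] sym[of a b] assms show ?thesis
    by (simp add: algebra_simps)
qed

lemma tendsto_half_step:
  assumes f: "f \<longlonglongrightarrow> L" and c: "\<forall>\<^sub>F n in sequentially. g n = f n * ((real n - c) / (2 * real n - c - d))"
  shows "g \<longlonglongrightarrow> L / 2"
proof -
  have "(\<lambda>n. f n * ((real n - c) / (2 * real n - c - d))) \<longlonglongrightarrow> L * (1 / 2)"
    by (intro tendsto_mult f) real_asymp
  then show ?thesis
    using Lim_transform_eventually[OF _ c[unfolded eq_commute[of "g _"]]] by simp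
qed

lemma binomial_ratio_tendsto:
  "(\<lambda>n. real ((2 * n - a - b) choose (n - a)) / real ((2 * n) choose n)) \<longlonglongrightarrow> 1 / 2 ^ (a + b)"
proof (induction a arbitrary: b)
  case 0
  show ?case
  proof (induction b)
    case 0
    then show ?case by simp
  next
    case (Suc b)
    have "\<forall>\<^sub>F n in sequentially. real ((2 * n - 0 - Suc b) choose (n - 0)) / real ((2 * n) choose n) =
        real ((2 * n - 0 - b) choose (n - 0)) / real ((2 * n) choose n) * ((real n - real b) / (2 * real n - real b - 0))"
      using eventually_gt_at_top[of b] by eventually_elim (use binomial_ratio_Suc_right[of 0 b] in simp)
    from tendsto_half_step[OF Suc this] show ?case by (simp add: mult.commute)
  qed
next
  case (Suc a)
  have "\<forall>\<^sub>F n in sequentially. real ((2 * n - Suc a - b) choose (n - Suc a)) / real ((2 * n) choose n) =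
      real ((2 * n - a - b) choose (n - a)) / real ((2 * n) choose n) * ((real n - real a) / (2 * real n - real a - real b))"
    using eventually_gt_at_top[of "a + b"] by eventually_elim (use binomial_ratio_Suc_left[of a b] in simp)
  from tendsto_half_step[OF Suc this] show ?case by (simp add: mult.commute)
qed

lemma real_binomial_pred_k:
  assumes "1 \<le> k" "k \<le> M"
  shows "real (M choose (k - 1)) = real (M choose k) * real k / (real M - real k + 1)"
proof -
  have "k * (M choose k) = M * ((M - 1) choose (k - 1))"
    using assms by (simp add: times_binomial_minus1_eq)
  moreover have "(M - (k - 1)) * (M choose (k - 1)) = M * ((M - 1) choose (k - 1))"
    by (rule binomial_absorb_comp)
  ultimately have "real (M - (k - 1)) * real (M choose (k - 1)) = real k * real (M choose k)"
    by (metis of_nat_mult)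
  moreover have "real (M - (k - 1)) = real M - real k + 1"
    using assms by (simp add: of_nat_diff)
  ultimately show ?thesis
    using assms by (simp add: field_simps)
qed

lemma prob_entry_eq:
  assumes ij: "j < i" and n: "i < n"
  shows "prob_entry n i (i + j) = ballot (i - 1) j * (real i - real j + 1) *
    (real ((2 * n - i - j) choose (n - i)) / real ((2 * n) choose n)) * ((real n + 1) / (real n - real j + 1))"
proof -
  define M where "M = 2 * n - i - j"
  define k where "k = n - i"
  have k: "1 \<le> k" "k \<le> M" and Mk: "real M - real k + 1 = real n - real j + 1" "real k = real n - real i"
    unfolding M_def k_def using n ij by (auto simp: of_nat_diff)
  have row1: "int n - int i = int k" and row2: "int n + 1 - int j = int (n + 1 - j)"
    unfolding k_def using n ij by auto
  have sym: "M choose (n + 1 - j) = M choose (k - 1)"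
    using binomial_symmetric[of "n + 1 - j" M] n ij unfolding M_def k_def by simp
  have "reflect_count i j (int n) M = real (M choose k) - real (M choose (k - 1))"
    unfolding reflect_count_def row1 row2 binom_int_of_nat sym ..
  also have "\<dots> = real (M choose k) * (real i - real j + 1) / (real n - real j + 1)"
    unfolding real_binomial_pred_k[OF k] Mk(1) unfolding Mk(2) using n ij by (simp add: field_simps)
  finally have reflect: "reflect_count i j (int n) M = \<dots>" .
  have "real (card {T \<in> SYT n. T 1 i = i + j}) = ballot (i - 1) j * reflect_count i j (int n) M"
    using card_tab2_entry[OF ij, of n n] n ij unfolding SYT_eq_tab2 M_def by (simp add: mult_2)
  note count = this[unfolded reflect]
  have total: "real (card (SYT n)) = real ((2 * n) choose n) / (real n + 1)"
    unfolding SYT_eq_tab2 card_tab2[OF order_refl] ballot_def by (simp add: mult_2)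
  show ?thesis
    unfolding prob_entry_def count total unfolding M_def k_def using n ij
    by (simp add: field_simps)
qed

lemma prob_entry_tendsto:
  assumes "j < i"
  shows "(\<lambda>n. prob_entry n i (i + j)) \<longlonglongrightarrow> ballot (i - 1) j * (real i - real j + 1) / 2 ^ (i + j)"
proof -
  have "(\<lambda>n. (real n + 1) / (real n - real j + 1)) \<longlonglongrightarrow> 1"
    by real_asymp
  then have "(\<lambda>n. ballot (i - 1) j * (real i - real j + 1) *
      (real ((2 * n - i - j) choose (n - i)) / real ((2 * n) choose n)) * ((real n + 1) / (real n - real j + 1)))
      \<longlonglongrightarrow> ballot (i - 1) j * (real i - real j + 1) * (1 / 2 ^ (i + j)) * 1"
    by (intro tendsto_intros binomial_ratio_tendsto)
  moreover have "\<forall>\<^sub>F n in sequentially. prob_entry n i (i + j) = ballot (i - 1) j * (real i - real j + 1) *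
      (real ((2 * n - i - j) choose (n - i)) / real ((2 * n) choose n)) * ((real n + 1) / (real n - real j + 1))"
    using eventually_gt_at_top[of i] by eventually_elim (rule prob_entry_eq[OF assms])
  ultimately show ?thesis
    by (simp add: tendsto_cong)
qed

definition nb_weight :: "nat \<Rightarrow> nat \<Rightarrow> real" where
  "nb_weight i j = real ((i - 1 + j) choose j) / 2 ^ (i + j)"

definition p_closed :: "nat \<Rightarrow> nat \<Rightarrow> real" where
  "p_closed i j = (real i - real j) * (real i - real j + 1) / real i * nb_weight i j"

lemma p_eq_p_closed:
  assumes "1 \<le> i" "j < i"
  shows "p i (i + j) = p_closed i j"
proof -
  have "p i (i + j) = ballot (i - 1) j * (real i - real j + 1) / 2 ^ (i + j)"
    unfolding p_def by (rule limI[OF prob_entry_tendsto[OF assms(2)]])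
  also have "\<dots> = p_closed i j"
    unfolding ballot_def p_closed_def nb_weight_def using assms by (simp add: of_nat_diff field_simps)
  finally show ?thesis .
qed

lemma sum_p_eq_sum_p_closed:
  assumes "1 \<le> i"
  shows "(\<Sum>r\<in>{i..2*i-1}. g r (p i r)) = (\<Sum>j<i. g (i + j) (p_closed i j))"
proof -
  have "(\<Sum>r\<in>{i..2*i-1}. g r (p i r)) = (\<Sum>j<i. g (i + j) (p i (i + j)))"
    using assms by (intro sum.reindex_bij_witness[of _ "\<lambda>j. i + j" "\<lambda>r. r - i"]) auto
  also have "\<dots> = (\<Sum>j<i. g (i + j) (p_closed i j))"
    using assms by (intro sum.cong refl) (simp add: p_eq_p_closed)
  finally show ?thesis .
qed

section \<open>Moments of the limit law\<close>

lemma nb_weight_Suc: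
  assumes "1 \<le> i"
  shows "real (Suc j) * nb_weight i (Suc j) = (real i + real j) / 2 * nb_weight i j"
proof -
  obtain m where m: "i = Suc m" using assms by (cases i) auto
  have "real (Suc j) * real (Suc (m + j) choose Suc j) = real (Suc (m + j)) * real ((m + j) choose j)"
    using Suc_times_binomial_eq[of "m + j" j] by (metis mult.commute of_nat_mult)
  then show ?thesis
    unfolding nb_weight_def m by (simp add: field_simps)
qed

lemma sum_nb_weight:
  assumes "1 \<le> i"
  shows "(\<Sum>j<i. nb_weight i j) = 1 / 2"
proof -
  obtain m where m: "i = Suc m" using assms by (cases i) auto
  have "(\<Sum>j<i. nb_weight i j) = (\<Sum>k\<le>m. (of_nat (m + k) gchoose k :: real) / 2 ^ k) / 2 ^ Suc m"
    unfolding m nb_weight_def lessThan_Suc_atMost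
    by (simp add: sum_divide_distrib binomial_gbinomial power_add field_simps)
  also have "\<dots> = 1 / 2"
    by (simp only: gbinomial_sum_nat_pow2) simp
  finally show ?thesis .
qed

text \<open>Since \<open>(i + j)/2 \<cdot> nb_weight i j = (j + 1) \<cdot> nb_weight i (j + 1)\<close>, the sum telescopes.\<close>

lemma sum_nb_weight_telescope:
  assumes "1 \<le> i" and f: "\<And>y. f y = (real i + y) / 2 * Y (y + 1) - y * Y y + K"
  shows "(\<Sum>j<i. f (real j) * nb_weight i j) = real i * Y (real i) * nb_weight i i + K / 2"
proof -
  let ?g = "\<lambda>j. Y (real j) * (real j * nb_weight i j)"
  have "(\<Sum>j<i. f (real j) * nb_weight i j) = (\<Sum>j<i. (?g (Suc j) - ?g j) + K * nb_weight i j)"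
  proof (rule sum.cong[OF refl])
    fix j
    have "Y (real j + 1) * (real (Suc j) * nb_weight i (Suc j)) = Y (real j + 1) * ((real i + real j) / 2 * nb_weight i j)"
      by (simp only: nb_weight_Suc[OF assms(1)])
    then show "f (real j) * nb_weight i j = (?g (Suc j) - ?g j) + K * nb_weight i j"
      by (simp add: f algebra_simps)
  qed
  also have "\<dots> = real i * Y (real i) * nb_weight i i + K / 2"
    unfolding sum.distrib sum_distrib_left[symmetric] sum_nb_weight[OF assms(1)]
    by (subst sum_lessThan_telescope) simp
  finally show ?thesis .
qed

definition central_ratio :: "nat \<Rightarrow> real" where
  "central_ratio n = real ((2 * n) choose n) / 4 ^ n"

lemma central_ratio_pos: "central_ratio n > 0"
  unfolding central_ratio_def by simp

lemma central_ratio_Suc: "central_ratio (Suc n) = central_ratio n * (2 * real n + 1) / (2 * real n + 2)"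
proof -
  define X where "X = (2 * n + 2) choose Suc n"
  define Y where "Y = (2 * n + 1) choose n"
  have "Suc n * X = Suc n * (2 * Y)"
    unfolding X_def Y_def using Suc_times_binomial_eq[of "2 * n + 1" n]
    by (simp del: binomial_Suc_Suc add: algebra_simps)
  then have X: "X = 2 * Y"
    by (metis Suc_neq_Zero mult_left_cancel)
  have "Suc n * Y = (2 * n + 1) * ((2 * n) choose n)"
    unfolding Y_def using binomial_absorb_comp[of "2 * n + 1" n] by simp
  from arg_cong[of _ _ real, OF this] have Y: "real Y = (2 * real n + 1) * real ((2 * n) choose n) / (real n + 1)"
    by (simp add: field_simps)
  have "central_ratio (Suc n) = real X / (4 * 4 ^ n)"
    unfolding central_ratio_def X_def by (simp del: binomial_Suc_Suc)
  also have "\<dots> = (2 * real n + 1) * real ((2 * n) choose n) / ((real n + 1) * (2 * 4 ^ n))"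
    unfolding X of_nat_mult Y by simp
  also have "\<dots> = central_ratio n * (2 * real n + 1) / (2 * real n + 2)"
    unfolding central_ratio_def by (simp add: algebra_simps)
  finally show ?thesis .
qed

lemma prod_wallis_eq_central_ratio:
  "(\<Prod>k=1..n. 4 * real k ^ 2 / (4 * real k ^ 2 - 1)) = 1 / (central_ratio n ^ 2 * (2 * real n + 1))"
proof (induction n)
  case 0
  then show ?case by (simp add: central_ratio_def)
next
  case (Suc n)
  have "(\<Prod>k=1..Suc n. 4 * real k ^ 2 / (4 * real k ^ 2 - 1))
      = 1 / (central_ratio n ^ 2 * (2 * real n + 1)) * (4 * real (Suc n) ^ 2 / (4 * real (Suc n) ^ 2 - 1))"
    using Suc by (simp add: prod.cl_ivl_Suc ac_simps del: of_nat_Suc)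
  also have "\<dots> = 1 / (central_ratio (Suc n) ^ 2 * (2 * real (Suc n) + 1))"
    using central_ratio_pos[of n] unfolding central_ratio_Suc by (simp add: field_simps power2_eq_square)
  finally show ?case .
qed

lemma central_ratio_asymp: "(\<lambda>n. sqrt (real n) * central_ratio n) \<longlonglongrightarrow> 1 / sqrt pi"
proof -
  have "(\<lambda>n. 1 / (central_ratio n ^ 2 * (2 * real n + 1))) \<longlonglongrightarrow> pi / 2"
    using wallis unfolding prod_wallis_eq_central_ratio .
  then have "(\<lambda>n. inverse (1 / (central_ratio n ^ 2 * (2 * real n + 1)))) \<longlonglongrightarrow> inverse (pi / 2)"
    by (rule tendsto_inverse) simp
  then have "(\<lambda>n. central_ratio n ^ 2 * (2 * real n + 1)) \<longlonglongrightarrow> 2 / pi"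
    by simp
  moreover have "(\<lambda>n. real n / (2 * real n + 1)) \<longlonglongrightarrow> 1 / 2"
    by real_asymp
  ultimately have "(\<lambda>n. central_ratio n ^ 2 * (2 * real n + 1) * (real n / (2 * real n + 1))) \<longlonglongrightarrow> 2 / pi * (1 / 2)"
    by (rule tendsto_mult)
  moreover have "central_ratio n ^ 2 * (2 * real n + 1) * (real n / (2 * real n + 1)) = central_ratio n ^ 2 * real n" for n
    by (simp add: add_pos_nonneg)
  ultimately have "(\<lambda>n. central_ratio n ^ 2 * real n) \<longlonglongrightarrow> 1 / pi"
    by simp
  then have "(\<lambda>n. sqrt (central_ratio n ^ 2 * real n)) \<longlonglongrightarrow> sqrt (1 / pi)"
    by (rule tendsto_real_sqrt)
  moreover have "sqrt (central_ratio n ^ 2 * real n) = sqrt (real n) * central_ratio n" for n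
    using central_ratio_pos by (simp add: real_sqrt_mult less_imp_le)
  ultimately show ?thesis
    by (simp add: real_sqrt_divide)
qed

text \<open>With \<open>X\<^sub>i = i + j\<close>, \<open>rev_moment t i\<close> is the moment \<open>E (2 i - X\<^sub>i)\<^sup>t\<close>.\<close>

definition rev_moment :: "nat \<Rightarrow> nat \<Rightarrow> real" where
  "rev_moment t i = (\<Sum>j<i. (real i - real j) ^ t * p_closed i j)"

lemma nb_weight_diag:
  assumes "1 \<le> i"
  shows "nb_weight i i = central_ratio i / 2"
proof -
  obtain m where m: "i = Suc m" using assms by (cases i) auto
  have "(Suc (m + m) choose m) = (Suc (m + m) choose Suc m)"
    using binomial_symmetric[of m "Suc (m + m)"] by simp
  then have pascal: "(Suc (Suc (m + m)) choose Suc m) = 2 * (Suc (m + m) choose Suc m)"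
    by (simp only: binomial_Suc_Suc) simp
  have four: "(4::real) ^ Suc m = 2 ^ (Suc m + Suc m)"
    by (simp flip: power_mult_distrib add: power_add)
  have nb: "nb_weight i i = real (Suc (m + m) choose Suc m) / 2 ^ (Suc m + Suc m)"
    unfolding nb_weight_def m by simp
  have central: "central_ratio i = real (Suc (Suc (m + m)) choose Suc m) / 4 ^ Suc m"
    unfolding central_ratio_def m by (simp only: mult_2 add_Suc_right add_Suc)
  show ?thesis
    unfolding nb central pascal four by (simp del: binomial_Suc_Suc add: field_simps)
qed

text \<open>Summing the certificate identity against the weights leaves only the boundary term at
  \<open>j = i\<close>, which is governed by the central binomial coefficient.\<close>

lemma rev_moment_eq:
  assumes cert: "\<And>x y. (x - y) ^ t * (x - y) * (x - y + 1) = (x + y) / 2 * Y x (y + 1) - y * Y x y + K x"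
    and i: "1 \<le> i"
  shows "rev_moment t i = Y (real i) (real i) * central_ratio i / 2 + K (real i) / (2 * real i)"
proof -
  have "real i * rev_moment t i = (\<Sum>j<i. (\<lambda>y. (real i - y) ^ t * (real i - y) * (real i - y + 1)) (real j) * nb_weight i j)"
    unfolding rev_moment_def p_closed_def sum_distrib_left
    by (intro sum.cong refl) (use i in \<open>simp add: field_simps\<close>)
  also have "\<dots> = real i * Y (real i) (real i) * nb_weight i i + K (real i) / 2"
    by (rule sum_nb_weight_telescope[OF i]) (rule cert)
  finally show ?thesis
    using i by (simp add: nb_weight_diag field_simps)
qed

lemma rev_moment_0:
  assumes "1 \<le> i"
  shows "rev_moment 0 i = 1"
proof -
  have "rev_moment 0 i = (2 * real i - 2 * real i) * central_ratio i / 2 + 2 * real i / (2 * real i)"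
    by (rule rev_moment_eq[where Y = "\<lambda>x y. 2 * x - 2 * y" and K = "\<lambda>x. 2 * x", OF _ assms]) algebra
  then show ?thesis
    using assms by simp
qed

lemma rev_moment_tendsto:
  assumes cert: "\<And>x y. (x - y) ^ t * (x - y) * (x - y + 1) = (x + y) / 2 * Y x (y + 1) - y * Y x y + K x"
    and Y: "(\<lambda>i. Y (real i) (real i) / (2 * sqrt (real i) ^ (t + 1))) \<longlonglongrightarrow> a"
    and K: "(\<lambda>i. K (real i) / (2 * real i * sqrt (real i) ^ t)) \<longlonglongrightarrow> b"
  shows "(\<lambda>i. rev_moment t i / sqrt (real i) ^ t) \<longlonglongrightarrow> a / sqrt pi + b"
proof -
  have "(\<lambda>i. Y (real i) (real i) / (2 * sqrt (real i) ^ (t + 1)) * (sqrt (real i) * central_ratio i)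
            + K (real i) / (2 * real i * sqrt (real i) ^ t)) \<longlonglongrightarrow> a * (1 / sqrt pi) + b"
    by (intro tendsto_intros Y K central_ratio_asymp)
  moreover have "\<forall>\<^sub>F i in sequentially.
      Y (real i) (real i) / (2 * sqrt (real i) ^ (t + 1)) * (sqrt (real i) * central_ratio i)
        + K (real i) / (2 * real i * sqrt (real i) ^ t) = rev_moment t i / sqrt (real i) ^ t"
    using eventually_ge_at_top[of 1]
    by eventually_elim (simp add: rev_moment_eq[OF cert] field_simps)
  ultimately show ?thesis
    by (simp add: tendsto_cong)
qed

text \<open>The certificates \<open>(Y, K)\<close> below solve the identity assumed in \<open>rev_moment_tendsto\<close>, which is
  linear in the coefficients of \<open>Y\<close> (of total degree \<open>t + 1\<close>) and \<open>K\<close>.\<close>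

lemma rev_moment_1_tendsto: "(\<lambda>i. rev_moment 1 i / sqrt (real i) ^ 1) \<longlonglongrightarrow> 4 / sqrt pi"
proof -
  have "(\<lambda>i. rev_moment 1 i / sqrt (real i) ^ 1) \<longlonglongrightarrow> 4 / sqrt pi + 0"
    by (rule rev_moment_tendsto[where
        Y = "\<lambda>x y. 4 + 6*x + 2*x^2 + 2*y - 4*x*y + 2*y^2"
        and K = "\<lambda>x. - 4*x"])
      (algebra, real_asymp+)
  then show ?thesis
    by simp
qed

lemma rev_moment_2_tendsto: "(\<lambda>i. rev_moment 2 i / sqrt (real i) ^ 2) \<longlonglongrightarrow> 6"
proof -
  have "(\<lambda>i. rev_moment 2 i / sqrt (real i) ^ 2) \<longlonglongrightarrow> 0 / sqrt pi + 6"
    by (rule rev_moment_tendsto[where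
        Y = "\<lambda>x y. - 20 - 26*x + 8*x^2 + 2*x^3 - 14*y - 4*x*y - 6*x^2*y - 4*y^2 + 6*x*y^2 - 2*y^3"
        and K = "\<lambda>x. 20*x + 12*x^2"])
      (algebra, real_asymp+)
  then show ?thesis
    by simp
qed

lemma rev_moment_3_tendsto: "(\<lambda>i. rev_moment 3 i / sqrt (real i) ^ 3) \<longlonglongrightarrow> 32 / sqrt pi"
proof -
  have "(\<lambda>i. rev_moment 3 i / sqrt (real i) ^ 3) \<longlonglongrightarrow> 32 / sqrt pi + 0"
    by (rule rev_moment_tendsto[where
        Y = "\<lambda>x y. 124 + 194*x + 2*x^2 + 10*x^3 + 2*x^4 + 86*y + 32*x*y - 14*x^2*y - 8*x^3*y + 30*y^2 - 2*x*y^2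
          + 12*x^2*y^2 + 6*y^3 - 8*x*y^3 + 2*y^4"
        and K = "\<lambda>x. - 124*x - 108*x^2"])
      (algebra, real_asymp+)
  then show ?thesis
    by simp
qed

lemma rev_moment_4_tendsto: "(\<lambda>i. rev_moment 4 i / sqrt (real i) ^ 4) \<longlonglongrightarrow> 60"
proof -
  have "(\<lambda>i. rev_moment 4 i / sqrt (real i) ^ 4) \<longlonglongrightarrow> 0 / sqrt pi + 60"
    by (rule rev_moment_tendsto[where
        Y = "\<lambda>x y. - 932 - 1666*x - 284*x^2 + 8*x^3 + 12*x^4 + 2*x^5 - 646*y - 388*x*y + 52*x^2*y - 28*x^3*y
          - 10*x^4*y - 224*y^2 - 8*x*y^2 + 12*x^2*y^2 + 20*x^3*y^2 - 52*y^3 + 12*x*y^3 - 20*x^2*y^3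
          - 8*y^4 + 10*x*y^4 - 2*y^5"
        and K = "\<lambda>x. 932*x + 1020*x^2 + 120*x^3"])
      (algebra, real_asymp+)
  then show ?thesis
    by simp
qed

lemma rev_moment_5_tendsto: "(\<lambda>i. rev_moment 5 i / sqrt (real i) ^ 5) \<longlonglongrightarrow> 384 / sqrt pi"
proof -
  have "(\<lambda>i. rev_moment 5 i / sqrt (real i) ^ 5) \<longlonglongrightarrow> 384 / sqrt pi + 0"
    by (rule rev_moment_tendsto[where
        Y = "\<lambda>x y. 8284 + 16362*x + 4938*x^2 - 68*x^3 + 16*x^4 + 14*x^5 + 2*x^6 + 5742*y + 4528*x*y - 76*x^2*y
          + 64*x^3*y - 46*x^4*y - 12*x^5*y + 1990*y^2 + 452*x*y^2 - 96*x^2*y^2 + 44*x^3*y^2 + 30*x^4*y^2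
          + 460*y^3 - 64*x*y^3 + 4*x^2*y^3 - 40*x^3*y^3 + 80*y^4 - 26*x*y^4 + 30*x^2*y^4 + 10*y^5
          - 12*x*y^5 + 2*y^6"
        and K = "\<lambda>x. - 8284*x - 10620*x^2 - 2400*x^3"])
      (algebra, real_asymp+)
  then show ?thesis
    by simp
qed

lemma rev_moment_6_tendsto: "(\<lambda>i. rev_moment 6 i / sqrt (real i) ^ 6) \<longlonglongrightarrow> 840"
proof -
  have "(\<lambda>i. rev_moment 6 i / sqrt (real i) ^ 6) \<longlonglongrightarrow> 0 / sqrt pi + 840"
    by (rule rev_moment_tendsto[where
        Y = "\<lambda>x y. - 85220 - 181962*x - 75044*x^2 - 3274*x^3 - 92*x^4 + 26*x^5 + 16*x^6 + 2*x^7 - 59070*y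
          - 56036*x*y - 4798*x^2*y + 112*x^3*y + 62*x^4*y - 68*x^5*y - 14*x^6*y - 20472*y^2 - 7934*x*y^2
          + 912*x^2*y^2 - 228*x^3*y^2 + 100*x^4*y^2 + 42*x^5*y^2 - 4730*y^3 - 112*x*y^3 + 52*x^2*y^3
          - 40*x^3*y^3 - 70*x^4*y^3 - 820*y^4 + 202*x*y^4 - 40*x^2*y^4 + 70*x^3*y^4 - 114*y^5 + 44*x*y^5
          - 42*x^2*y^5 - 12*y^6 + 14*x*y^6 - 2*y^7"
        and K = "\<lambda>x. 85220*x + 122892*x^2 + 39480*x^3 + 1680*x^4"])
      (algebra, real_asymp+)
  then show ?thesis
    by simp
qed

text \<open>The moments \<open>E (\<surd>2 R)\<^sup>t = 2\<^sup>t \<Gamma>((t + 3)/2) / \<Gamma>(3/2)\<close> of a Maxwell variable \<open>R\<close>.\<close>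

definition rev_moment_limit :: "nat \<Rightarrow> real" where
  "rev_moment_limit t = [1, 4 / sqrt pi, 6, 32 / sqrt pi, 60, 384 / sqrt pi, 840] ! t"

lemma rev_moment_tendsto_limit:
  assumes "t \<le> 6"
  shows "(\<lambda>i. rev_moment t i / sqrt (real i) ^ t) \<longlonglongrightarrow> rev_moment_limit t"
proof -
  have "\<forall>\<^sub>F i in sequentially. rev_moment 0 i / sqrt (real i) ^ 0 = 1"
    using eventually_ge_at_top[of 1] by eventually_elim (simp add: rev_moment_0)
  then have "(\<lambda>i. rev_moment 0 i / sqrt (real i) ^ 0) \<longlonglongrightarrow> 1"
    by (rule tendsto_eventually)
  moreover have "t = 0 \<or> t = 1 \<or> t = 2 \<or> t = 3 \<or> t = 4 \<or> t = 5 \<or> t = 6"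
    using assms by arith
  ultimately show ?thesis
    using rev_moment_1_tendsto rev_moment_2_tendsto rev_moment_3_tendsto
      rev_moment_4_tendsto rev_moment_5_tendsto rev_moment_6_tendsto
    unfolding rev_moment_limit_def by auto
qed

section \<open>Standardized moments\<close>

definition central_moment :: "nat \<Rightarrow> nat \<Rightarrow> real" where
  "central_moment k i = (\<Sum>r\<in>{i..2*i-1}. (real r - mu i) ^ k * p i r)"

lemma mu_eq_rev_moment:
  assumes i: "1 \<le> i"
  shows "mu i = 2 * real i - rev_moment 1 i"
proof -
  have "mu i = (\<Sum>j<i. 2 * real i * p_closed i j - (real i - real j) * p_closed i j)"
    unfolding mu_def sum_p_eq_sum_p_closed[OF i, of "\<lambda>r q. real r * q"]
    by (intro sum.cong refl) (simp add: algebra_simps)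
  also have "\<dots> = 2 * real i * rev_moment 0 i - rev_moment 1 i"
    unfolding rev_moment_def by (simp add: sum_subtractf sum_distrib_left)
  finally show ?thesis
    using rev_moment_0[OF i] by simp
qed

text \<open>Since \<open>X\<^sub>i - \<mu>\<^sub>i = E (2 i - X\<^sub>i) - (2 i - X\<^sub>i)\<close>, central moments are binomial
  combinations of the moments of \<open>2 i - X\<^sub>i\<close>.\<close>

lemma central_moment_eq:
  assumes i: "1 \<le> i"
  shows "central_moment k i = (\<Sum>t\<le>k. real (k choose t) * (-1) ^ t * rev_moment 1 i ^ (k - t) * rev_moment t i)"
proof -
  have "central_moment k i = (\<Sum>j<i. ((-1) * (real i - real j) + rev_moment 1 i) ^ k * p_closed i j)"
    unfolding central_moment_def sum_p_eq_sum_p_closed[OF i, of "\<lambda>r q. (real r - mu i) ^ k * q"]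
    by (simp add: mu_eq_rev_moment[OF i] algebra_simps)
  also have "\<dots> = (\<Sum>j<i. \<Sum>t\<le>k. real (k choose t) * (-1) ^ t * rev_moment 1 i ^ (k - t) * ((real i - real j) ^ t * p_closed i j))"
    unfolding binomial_ring power_mult_distrib sum_distrib_right by (simp only: mult_ac)
  also have "\<dots> = (\<Sum>t\<le>k. real (k choose t) * (-1) ^ t * rev_moment 1 i ^ (k - t) * rev_moment t i)"
    unfolding rev_moment_def by (subst sum.swap) (simp add: sum_distrib_left)
  finally show ?thesis .
qed

definition central_moment_limit :: "nat \<Rightarrow> real" where
  "central_moment_limit k =
    (\<Sum>t\<le>k. real (k choose t) * (-1) ^ t * rev_moment_limit 1 ^ (k - t) * rev_moment_limit t)"

lemma central_moment_tendsto:
  assumes k: "k \<le> 6"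
  shows "(\<lambda>i. central_moment k i / sqrt (real i) ^ k) \<longlonglongrightarrow> central_moment_limit k"
proof -
  have "(\<lambda>i. \<Sum>t\<le>k. real (k choose t) * (-1) ^ t * (rev_moment 1 i / sqrt (real i) ^ 1) ^ (k - t)
      * (rev_moment t i / sqrt (real i) ^ t)) \<longlonglongrightarrow> central_moment_limit k"
    unfolding central_moment_limit_def using k by (intro tendsto_intros rev_moment_tendsto_limit) auto
  moreover have "\<forall>\<^sub>F i in sequentially. (\<Sum>t\<le>k. real (k choose t) * (-1) ^ t * (rev_moment 1 i / sqrt (real i) ^ 1) ^ (k - t)
      * (rev_moment t i / sqrt (real i) ^ t)) = central_moment k i / sqrt (real i) ^ k"
    using eventually_ge_at_top[of 1]
  proof eventually_elim
    case (elim i)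
    have "sqrt (real i) ^ k = sqrt (real i) ^ (k - t) * sqrt (real i) ^ t" if "t \<le> k" for t
      using that by (simp flip: power_add)
    then show ?case
      unfolding central_moment_eq[OF elim] sum_divide_distrib using elim
      by (intro sum.cong refl) (simp add: power_divide)
  qed
  ultimately show ?thesis
    by (simp add: tendsto_cong)
qed

lemma sqrt_pi_mult_self: "sqrt pi * sqrt pi = pi" "sqrt pi * (sqrt pi * x) = pi * x"
  by (simp_all add: mult.assoc[symmetric])

lemma central_moment_limit_eq:
  "central_moment_limit 2 = 2 * (3 * pi - 8) / pi"
  "central_moment_limit 3 = 8 * (5 * pi - 16) / (pi * sqrt pi)"
  "central_moment_limit 4 = 4 * (15 * pi ^ 2 + 16 * pi - 192) / pi ^ 2"
  "central_moment_limit 5 = 16 * (51 * pi ^ 2 - 80 * pi - 256) / (pi ^ 2 * sqrt pi)"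
  "central_moment_limit 6 = 8 * (105 * pi ^ 3 + 648 * pi ^ 2 - 2240 * pi - 2560) / pi ^ 3"
  unfolding central_moment_limit_def rev_moment_limit_def
  by (simp_all add: eval_nat_numeral field_simps sqrt_pi_mult_self)

lemma std_moment_tendsto:
  assumes "k \<le> 6"
  shows "(\<lambda>i. std_moment i k) \<longlonglongrightarrow> central_moment_limit k / sqrt (central_moment_limit 2) ^ k"
proof -
  have "(\<lambda>i. (central_moment k i / sqrt (real i) ^ k) / sqrt (central_moment 2 i / sqrt (real i) ^ 2) ^ k)
      \<longlonglongrightarrow> central_moment_limit k / sqrt (central_moment_limit 2) ^ k"
    using central_moment_limit_eq(1) pi_gt3 assms by (intro tendsto_intros central_moment_tendsto) auto
  moreover have "\<forall>\<^sub>F i in sequentially.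
      (central_moment k i / sqrt (real i) ^ k) / sqrt (central_moment 2 i / sqrt (real i) ^ 2) ^ k = std_moment i k"
    using eventually_ge_at_top[of 1]
  proof eventually_elim
    case (elim i)
    then have "Defs.sigma i = sqrt (central_moment 2 i / sqrt (real i) ^ 2) * sqrt (real i)"
      unfolding Defs.sigma_def central_moment_def by (simp add: real_sqrt_mult[symmetric])
    with elim show ?case
      unfolding std_moment_def central_moment_def[symmetric] by (simp add: power_mult_distrib)
  qed
  ultimately show ?thesis
    by (simp add: tendsto_cong)
qed

lemma powr_half_eq_sqrt_power:
  assumes "x > 0"
  shows "x powr (real n / 2) = sqrt x ^ n"
proof -
  have "x powr (real n / 2) = (x powr (1 / 2)) powr real n"
    by (simp add: powr_powr)
  also have "\<dots> = sqrt x ^ n"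
    using assms by (simp add: powr_half_sqrt powr_realpow)
  finally show ?thesis .
qed

lemma std_moment_limit_eq:
  "central_moment_limit 3 / sqrt (central_moment_limit 2) ^ 3 = 2 * (5*pi - 16) * sqrt 2 / (3*pi - 8) powr (3/2)"
  "central_moment_limit 4 / sqrt (central_moment_limit 2) ^ 4 = (15*pi^2 + 16*pi - 192) / (3*pi - 8)^2"
  "central_moment_limit 5 / sqrt (central_moment_limit 2) ^ 5 = 2 * (51*pi^2 - 80*pi - 256) * sqrt 2 / (3*pi - 8) powr (5/2)"
  "central_moment_limit 6 / sqrt (central_moment_limit 2) ^ 6 = (105*pi^3 + 648*pi^2 - 2240*pi - 2560) / (3*pi - 8)^3"
proof -
  define s where "s = sqrt pi"
  define q where "q = sqrt (3 * pi - 8)"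
  have s: "s > 0" "pi = s ^ 2"
    unfolding s_def by simp_all
  have q: "q > 0" "3 * pi - 8 = q ^ 2"
    unfolding q_def using pi_gt3 by simp_all
  have sqrt_limit_2: "sqrt (central_moment_limit 2) = sqrt 2 * q / s"
    unfolding central_moment_limit_eq q_def s_def by (simp only: real_sqrt_mult real_sqrt_divide)
  have powr: "(3 * pi - 8) powr (3 / 2) = q ^ 3" "(3 * pi - 8) powr (5 / 2) = q ^ 5"
    unfolding q_def using powr_half_eq_sqrt_power[of "3 * pi - 8" 3] powr_half_eq_sqrt_power[of "3 * pi - 8" 5] pi_gt3
    by simp_all
  have sqrt2: "sqrt 2 ^ 3 = 2 * sqrt (2::real)" "sqrt 2 ^ 4 = (4::real)" "sqrt 2 ^ 5 = 4 * sqrt (2::real)"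
    "sqrt 2 ^ 6 = (8::real)" "sqrt 2 * sqrt 2 = (2::real)" "sqrt 2 * (sqrt 2 * x) = 2 * x" for x :: real
    by (simp_all add: power_numeral_reduce mult.assoc[symmetric])
  show "central_moment_limit 3 / sqrt (central_moment_limit 2) ^ 3 = 2 * (5*pi - 16) * sqrt 2 / (3*pi - 8) powr (3/2)"
    unfolding sqrt_limit_2 unfolding central_moment_limit_eq powr s_def[symmetric] unfolding s(2)
    using s q by (simp add: field_simps power2_eq_square sqrt2, algebra)
  show "central_moment_limit 4 / sqrt (central_moment_limit 2) ^ 4 = (15*pi^2 + 16*pi - 192) / (3*pi - 8)^2"
    unfolding sqrt_limit_2 unfolding central_moment_limit_eq q(2) s_def[symmetric] unfolding s(2)
    using s q by (simp add: field_simps power2_eq_square sqrt2, algebra)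
  show "central_moment_limit 5 / sqrt (central_moment_limit 2) ^ 5 = 2 * (51*pi^2 - 80*pi - 256) * sqrt 2 / (3*pi - 8) powr (5/2)"
    unfolding sqrt_limit_2 unfolding central_moment_limit_eq powr s_def[symmetric] unfolding s(2)
    using s q by (simp add: field_simps power2_eq_square sqrt2, algebra)
  show "central_moment_limit 6 / sqrt (central_moment_limit 2) ^ 6 = (105*pi^3 + 648*pi^2 - 2240*pi - 2560) / (3*pi - 8)^3"
    unfolding sqrt_limit_2 unfolding central_moment_limit_eq q(2) s_def[symmetric] unfolding s(2)
    using s q by (simp add: field_simps power2_eq_square sqrt2, algebra)
qed

theorem mainTheorem5:
  shows "(\<lambda>i. std_moment i 3) \<longlonglongrightarrow> 2 * (5*pi - 16) * sqrt 2 / (3*pi - 8) powr (3/2)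
       \<and> (\<lambda>i. std_moment i 4) \<longlonglongrightarrow> (15*pi^2 + 16*pi - 192) / (3*pi - 8)^2
       \<and> (\<lambda>i. std_moment i 5) \<longlonglongrightarrow> 2 * (51*pi^2 - 80*pi - 256) * sqrt 2 / (3*pi - 8) powr (5/2)
       \<and> (\<lambda>i. std_moment i 6) \<longlonglongrightarrow> (105*pi^3 + 648*pi^2 - 2240*pi - 2560) / (3*pi - 8)^3"
  using std_moment_tendsto[of 3] std_moment_tendsto[of 4] std_moment_tendsto[of 5] std_moment_tendsto[of 6]
  unfolding std_moment_limit_eq by simp

end
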